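(* Let $G$ be a persistent graph with vertex order $<$, let $k\ge 4$, and let $p_1,\dots,p_k\in V(G)$ form an induced cycle in this order (edges $\{p_i,p_{i+1}\}$ for $1\le i<k$ and $\{p_k,p_1\}$). If $p_2$ is the leftmost of $p_1,\dots,p_k$, then each of $p_4,\dots,p_k$ lies to the left of both $p_1$ and $p_3$.
   Context: A persistent graph is a graph $G$ together with a linear order $v_1<v_2<\dots<v_n$ on $V(G)$ such that (1) $\{v_i,v_{i+1}\}\in E(G)$ for all $i$; (2) X-property: for all $p<q<r<s$, if $\{p,r\}\in E(G)$ and $\{q,s\}\in E(G)$ then $\{p,s\}\in E(G)$; (3) bar-property: if $\{p,q\}\in E(G)$ and $p,q$ are not consecutive in the order, then there is a vertex $r$ with $p<r<q$ adjacent to both $p$ and $q$. "Left of" refers to the order $<$. *)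

theory Defs
  imports Main
begin

text \<open>Simple graph on a finite vertex set V of a linearly ordered type; the vertex
order is the type's order restricted to V. Edges: symmetric irreflexive relation E.\<close>

definition consec :: "'a::linorder set \<Rightarrow> 'a \<Rightarrow> 'a \<Rightarrow> bool" where
  "consec V p q \<longleftrightarrow> p \<in> V \<and> q \<in> V \<and> p < q \<and> \<not> (\<exists>r\<in>V. p < r \<and> r < q)"

definition simple_graph :: "'a set \<Rightarrow> ('a \<Rightarrow> 'a \<Rightarrow> bool) \<Rightarrow> bool" where
  "simple_graph V E \<longleftrightarrow> finite V \<and> (\<forall>x y. E x y \<longrightarrow> x \<in> V \<and> y \<in> V)
     \<and> (\<forall>x y. E x y \<longrightarrow> E y x) \<and> (\<forall>x. \<not> E x x)"

definition persistent_graph :: "'a::linorder set \<Rightarrow> ('a \<Rightarrow> 'a \<Rightarrow> bool) \<Rightarrow> bool" where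
  "persistent_graph V E \<longleftrightarrow> simple_graph V E
     \<and> (\<forall>p q. consec V p q \<longrightarrow> E p q)
     \<and> (\<forall>p\<in>V. \<forall>q\<in>V. \<forall>r\<in>V. \<forall>s\<in>V. p < q \<and> q < r \<and> r < s \<and> E p r \<and> E q s \<longrightarrow> E p s)
     \<and> (\<forall>p q. E p q \<and> p < q \<and> \<not> consec V p q \<longrightarrow> (\<exists>r\<in>V. p < r \<and> r < q \<and> E p r \<and> E r q))"

definition induced_cycle :: "'a set \<Rightarrow> ('a \<Rightarrow> 'a \<Rightarrow> bool) \<Rightarrow> nat \<Rightarrow> (nat \<Rightarrow> 'a) \<Rightarrow> bool" where
  "induced_cycle V E k p \<longleftrightarrow> (\<forall>i\<in>{1..k}. p i \<in> V) \<and> inj_on p {1..k}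
     \<and> (\<forall>i\<in>{1..k}. \<forall>j\<in>{1..k}. E (p i) (p j) \<longleftrightarrow>
           (j = i + 1 \<or> i = j + 1 \<or> (i = 1 \<and> j = k) \<or> (i = k \<and> j = 1)))"

end

theory Submission
  imports Defs
begin

text \<open>Let \<open>a = p 2\<close>, and let \<open>m < M\<close> be its two cycle neighbours \<open>p 1, p 3\<close>, which are
nonadjacent. The path \<open>p 4, \<dots>, p k\<close> avoids the neighbourhood of \<open>a\<close> and lies right of \<open>a\<close>, so by
the X-property none of its edges jumps over a neighbour of \<open>a\<close>: the whole path lies on one side of
each such neighbour. If some path vertex were right of \<open>m\<close>, the whole path would be. But the least
neighbour \<open>b > m\<close> of \<open>a\<close> is adjacent to \<open>m\<close> (a consequence of the bar-property), and then the
X-property forces the path end adjacent to \<open>m\<close> to lie left of \<open>b\<close> and the end adjacent to \<open>M\<close>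
to lie right of \<open>b\<close>.\<close>

lemma persistent_graph_edge_sym:
  "persistent_graph V E \<Longrightarrow> E x y \<Longrightarrow> E y x"
  unfolding persistent_graph_def simple_graph_def by blast

lemma persistent_graph_X:
  "persistent_graph V E \<Longrightarrow> p < q \<Longrightarrow> q < r \<Longrightarrow> r < s \<Longrightarrow> E p r \<Longrightarrow> E q s \<Longrightarrow> E p s"
  unfolding persistent_graph_def simple_graph_def by blast

lemma persistent_graph_bar:
  assumes "persistent_graph V E" "E p q" "p < q" "\<not> consec V p q"
  obtains r where "r \<in> V" "p < r" "r < q" "E p r" "E r q"
  using assms unfolding persistent_graph_def by blast

lemma persistent_graph_finite: "persistent_graph V E \<Longrightarrow> finite V"
  unfolding persistent_graph_def simple_graph_def by blast

lemma persistent_graph_edge_in_V: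
  "persistent_graph V E \<Longrightarrow> E x y \<Longrightarrow> x \<in> V \<and> y \<in> V"
  unfolding persistent_graph_def simple_graph_def by blast

lemma persistent_next_right_neighbours_adjacent:
  assumes G: "persistent_graph V E"
    and "a < m" "m < b" "E a m" "E a b"
    and between: "\<And>v. m < v \<Longrightarrow> v < b \<Longrightarrow> \<not> E a v"
  shows "E m b"
proof (rule ccontr)
  assume nEmb: "\<not> E m b"
  define C where "C = {v\<in>V. a \<le> v \<and> v < m \<and> E v b}"
  have "finite C" "a \<in> C"
    using persistent_graph_finite[OF G] persistent_graph_edge_in_V[OF G \<open>E a b\<close>] assms(2,5)
    unfolding C_def by auto
  define c where "c = Max C"
  have "c \<in> C" and c_max: "\<And>v. v \<in> C \<Longrightarrow> v \<le> c"
    using \<open>finite C\<close> \<open>a \<in> C\<close> Max_in unfolding c_def by auto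
  then have "a \<le> c" "c < m" "E c b" unfolding C_def by auto
  have "m \<in> V" using persistent_graph_edge_in_V[OF G \<open>E a m\<close>] by blast
  then have "\<not> consec V c b" using \<open>c < m\<close> \<open>m < b\<close> unfolding consec_def by blast
  moreover have "c < b" using \<open>c < m\<close> \<open>m < b\<close> by simp
  ultimately obtain c' where "c' \<in> V" "c < c'" "c' < b" "E c c'" "E c' b"
    using persistent_graph_bar[OF G \<open>E c b\<close>] by blast
  consider "c' = m" | "m < c'" | "c' < m" by fastforce
  then show False
  proof cases
    case 1
    then show False using \<open>E c' b\<close> nEmb by simp
  next
    case 2
    have "E a c'"
      using \<open>a \<le> c\<close> \<open>E c c'\<close> persistent_graph_X[OF G _ \<open>c < m\<close> 2 \<open>E a m\<close> \<open>E c c'\<close>]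
      by (cases "a = c") auto
    then show False using between 2 \<open>c' < b\<close> by blast
  next
    case 3
    then have "c' \<in> C" using \<open>c' \<in> V\<close> \<open>a \<le> c\<close> \<open>c < c'\<close> \<open>E c' b\<close> unfolding C_def by auto
    then show False using c_max \<open>c < c'\<close> by fastforce
  qed
qed

lemma persistent_nonadjacent_neighbours_separated:
  assumes G: "persistent_graph V E"
    and "a < m" "m < M" "E a m" "E a M" "\<not> E m M"
    and "E m w" "E z M" "m < z" "\<not> E a w"
  shows "\<exists>b. E a b \<and> a < b \<and> w < b \<and> \<not> z < b"
proof -
  define S where "S = {v\<in>V. m < v \<and> E a v}"
  have "finite S" "M \<in> S"
    using persistent_graph_finite[OF G] persistent_graph_edge_in_V[OF G \<open>E a M\<close>] assms(3,5)
    unfolding S_def by auto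
  define b where "b = Min S"
  have "b \<in> S" and b_min: "\<And>v. v \<in> S \<Longrightarrow> b \<le> v"
    using \<open>finite S\<close> \<open>M \<in> S\<close> Min_in unfolding b_def by auto
  then have "m < b" "E a b" "b \<le> M" using \<open>M \<in> S\<close> unfolding S_def by auto
  have "E m b"
  proof (rule persistent_next_right_neighbours_adjacent[OF G \<open>a < m\<close> \<open>m < b\<close> \<open>E a m\<close> \<open>E a b\<close>])
    fix v assume "m < v" "v < b"
    then show "\<not> E a v"
      using b_min persistent_graph_edge_in_V[OF G] unfolding S_def by fastforce
  qed
  have "\<not> b < w" "b \<noteq> w"
    using persistent_graph_X[OF G \<open>a < m\<close> \<open>m < b\<close> _ \<open>E a b\<close> \<open>E m w\<close>] \<open>E a b\<close> \<open>\<not> E a w\<close>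
    by auto
  then have "w < b" by simp
  moreover have "\<not> z < b"
  proof
    assume "z < b"
    have "b < M" using \<open>b \<le> M\<close> \<open>E m b\<close> \<open>\<not> E m M\<close> by (cases "b = M") auto
    then show False
      using persistent_graph_X[OF G \<open>m < z\<close> \<open>z < b\<close> _ \<open>E m b\<close> \<open>E z M\<close>] \<open>\<not> E m M\<close> by blast
  qed
  ultimately show ?thesis using \<open>E a b\<close> \<open>a < m\<close> \<open>m < b\<close> by auto
qed

lemma persistent_path_avoiding_neighbours_one_side:
  assumes G: "persistent_graph V E"
    and path: "\<And>j. lo \<le> j \<Longrightarrow> j < hi \<Longrightarrow> E (f j) (f (Suc j))"
    and avoid: "\<And>j. lo \<le> j \<Longrightarrow> j \<le> hi \<Longrightarrow> x < f j \<and> \<not> E x (f j)"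
    and "E x v" "x < v" "lo \<le> i" "i \<le> hi"
  shows "f i < v \<longleftrightarrow> f lo < v"
  using \<open>lo \<le> i\<close> \<open>i \<le> hi\<close>
proof (induction i rule: dec_induct)
  case base
  then show ?case by simp
next
  case (step n)
  have "x < f n" "x < f (Suc n)" "f n \<noteq> v" "f (Suc n) \<noteq> v"
    using avoid[of n] avoid[of "Suc n"] step.hyps step.prems \<open>E x v\<close> by auto
  moreover have "\<not> (f n < v \<and> v < f (Suc n))"
    using persistent_graph_X[OF G \<open>x < f n\<close> _ _ \<open>E x v\<close> path[of n]] avoid[of "Suc n"]
      step.hyps step.prems by auto
  moreover have "\<not> (f (Suc n) < v \<and> v < f n)"
    using persistent_graph_X[OF G \<open>x < f (Suc n)\<close> _ _ \<open>E x v\<close>]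
      persistent_graph_edge_sym[OF G path[of n]] avoid[of n] step.hyps step.prems by auto
  ultimately show ?case using step.IH step.prems by auto
qed

lemma induced_cycle_edge_iff:
  "induced_cycle V E k p \<Longrightarrow> i \<in> {1..k} \<Longrightarrow> j \<in> {1..k} \<Longrightarrow>
    E (p i) (p j) \<longleftrightarrow> (j = i + 1 \<or> i = j + 1 \<or> (i = 1 \<and> j = k) \<or> (i = k \<and> j = 1))"
  unfolding induced_cycle_def by blast

lemma induced_cycle_distinct:
  "induced_cycle V E k p \<Longrightarrow> i \<in> {1..k} \<Longrightarrow> j \<in> {1..k} \<Longrightarrow> i \<noteq> j \<Longrightarrow> p i \<noteq> p j"
  unfolding induced_cycle_def inj_on_def by blast

lemma induced_cycle_path_one_side:
  assumes G: "persistent_graph V E" and "k \<ge> 4" and C: "induced_cycle V E k p"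
    and leftmost: "\<forall>i\<in>{1..k}. p 2 \<le> p i"
    and "E (p 2) v" "p 2 < v" "i \<in> {4..k}"
  shows "p i < v \<longleftrightarrow> p 4 < v"
proof (rule persistent_path_avoiding_neighbours_one_side[OF G _ _ \<open>E (p 2) v\<close> \<open>p 2 < v\<close>])
  show "E (p j) (p (Suc j))" if "4 \<le> j" "j < k" for j
    using induced_cycle_edge_iff[OF C, of j "Suc j"] that by simp
  show "p 2 < p j \<and> \<not> E (p 2) (p j)" if "4 \<le> j" "j \<le> k" for j
  proof
    have "p 2 \<le> p j" "p 2 \<noteq> p j"
      using leftmost induced_cycle_distinct[OF C, of 2 j] that by auto
    then show "p 2 < p j" by simp
    show "\<not> E (p 2) (p j)" using induced_cycle_edge_iff[OF C, of 2 j] that by auto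
  qed
qed (use \<open>i \<in> {4..k}\<close> in auto)

theorem lemma3:
  fixes V :: "'a::linorder set" and E :: "'a \<Rightarrow> 'a \<Rightarrow> bool"
    and k :: nat and p :: "nat \<Rightarrow> 'a"
  assumes "persistent_graph V E"
    and "k \<ge> 4"
    and "induced_cycle V E k p"
    and "\<forall>i\<in>{1..k}. p 2 \<le> p i"
  shows "\<forall>i\<in>{4..k}. p i < p 1 \<and> p i < p 3"
proof (rule ccontr)
  note one_side = induced_cycle_path_one_side[OF assms]
  note separated = persistent_nonadjacent_neighbours_separated[OF assms(1)]
  note edge = induced_cycle_edge_iff[OF assms(3)]
  note distinct = induced_cycle_distinct[OF assms(3)]
  have cycle_edges: "E (p 2) (p 1)" "E (p 2) (p 3)" "\<not> E (p 1) (p 3)" "\<not> E (p 3) (p 1)"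
    "E (p 3) (p 4)" "E (p k) (p 1)" "\<not> E (p 2) (p 4)" "\<not> E (p 2) (p k)"
    using edge[of 2 1] edge[of 2 3] edge[of 1 3] edge[of 3 1] edge[of 3 4] edge[of k 1]
      edge[of 2 4] edge[of 2 k] assms(2) by auto
  have "p 2 \<le> p 1" "p 2 \<le> p 3" "p 2 \<noteq> p 1" "p 2 \<noteq> p 3" "p 1 \<noteq> p 3" "p 4 \<noteq> p 1" "p k \<noteq> p 3"
    using assms(2,4) distinct[of 2 1] distinct[of 2 3] distinct[of 1 3] distinct[of 4 1]
      distinct[of k 3] by auto
  then have "p 2 < p 1" "p 2 < p 3" by simp_all
  assume "\<not> (\<forall>i\<in>{4..k}. p i < p 1 \<and> p i < p 3)"
  then obtain i where i: "i \<in> {4..k}" "\<not> p i < p 1 \<or> \<not> p i < p 3" by blast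
  have "p i \<noteq> p 1" "p i \<noteq> p 3" using i distinct[of i 1] distinct[of i 3] by auto
  consider "p 1 < p 3" | "p 3 < p 1" using \<open>p 1 \<noteq> p 3\<close> by fastforce
  then show False
  proof cases
    case 1
    with i \<open>p i \<noteq> p 1\<close> have "p 1 < p 4"
      using one_side[of "p 1" i] cycle_edges \<open>p 2 < p 1\<close> \<open>p 4 \<noteq> p 1\<close> by auto
    then obtain b where "E (p 2) b" "p 2 < b" "p k < b" "\<not> p 4 < b"
      using separated[OF \<open>p 2 < p 1\<close> 1, of "p k" "p 4"] cycle_edges assms(1)
        persistent_graph_edge_sym by blast
    then show False using one_side[of b k] assms(2) by auto
  next
    case 2
    with i \<open>p i \<noteq> p 3\<close> have "p 3 < p k"
      using one_side[of "p 3" i] one_side[of "p 3" k] cycle_edges \<open>p 2 < p 3\<close> \<open>p k \<noteq> p 3\<close> assms(2)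
      by auto
    then obtain b where "E (p 2) b" "p 2 < b" "p 4 < b" "\<not> p k < b"
      using separated[OF \<open>p 2 < p 3\<close> 2, of "p 4" "p k"] cycle_edges by blast
    then show False using one_side[of b k] assms(2) by auto
  qed
qed

end
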